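(* Let $f=\sum_{j=1}^n f_j\mathbb{1}_{\Delta_j}$, where $f_1,\dots,f_n\in\mathbb{R}\setminus\{0\}$ are pairwise distinct and $\Delta_1,\dots,\Delta_n\in\mathcal{B}(\mathbb{R}^d)$ are pairwise disjoint with finite Lebesgue measure and $\nu_d(\Delta_1)>0$. Suppose $\sum_{j=2}^n \left(\frac{|f_j|}{|f_1|}\right)^{\beta+\frac{c-1}{2}}\frac{\nu_d(\Delta_j)}{\nu_d(\Delta_1)}<1.$ Then for every $v\in L^2(\mathbb{R}^\times,|x|^c dx)$ the equation $v(x)=\int_{\mathrm{supp}(f)}\frac{u(f(s))}{|f(s)|}w(x/f(s))\,ds$ ($x\in\mathbb{R}^\times$) has a unique solution $w\in L^2(\mathbb{R}^\times,|x|^c dx)$.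
   Context: $\mathbb{R}^\times=\mathbb{R}\setminus\{0\}$; $\nu_d$ is Lebesgue measure on $\mathbb{R}^d$; $\mathrm{supp}(f)=\{s: f(s)\neq0\}$. Fix $c\ge0$, $\beta\in\mathbb{R}$, and $u:\mathbb{R}^\times\to\mathbb{R}$ either $u(x)=|x|^\beta$ or $u(x)=\mathrm{sgn}(x)|x|^\beta$. *)

theory Defs
  imports "HOL-Analysis.Analysis"
begin

text \<open>Weighted measure |x|^c dx on the reals (the point 0 is a null set, so this
  is the measure on the punctured line).\<close>
definition weighted_measure :: "real \<Rightarrow> real measure" where
  "weighted_measure c = density lborel (\<lambda>x. ennreal (\<bar>x\<bar> powr c))"

text \<open>Membership in L^2(R^x, |x|^c dx) (representatives; equality is a.e.).\<close>
definition L2w :: "real \<Rightarrow> (real \<Rightarrow> real) \<Rightarrow> bool" where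
  "L2w c w \<longleftrightarrow> w \<in> borel_measurable borel \<and> integrable (weighted_measure c) (\<lambda>x. (w x)\<^sup>2)"

definition simple_fun :: "nat \<Rightarrow> (nat \<Rightarrow> real) \<Rightarrow> (nat \<Rightarrow> 'd set) \<Rightarrow> 'd \<Rightarrow> real" where
  "simple_fun n fv \<Delta> s = (\<Sum>j=1..n. fv j * indicator (\<Delta> j) s)"

definition supp :: "('d \<Rightarrow> real) \<Rightarrow> 'd set" where
  "supp f = {s. f s \<noteq> 0}"

definition rhs_op :: "(real \<Rightarrow> real) \<Rightarrow> ('d::euclidean_space \<Rightarrow> real) \<Rightarrow> (real \<Rightarrow> real) \<Rightarrow> real \<Rightarrow> real" where
  "rhs_op u f w x = (LINT s : supp f | lborel. u (f s) / \<bar>f s\<bar> * w (x / f s))"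

end

theory Submission
  imports Defs
begin

text \<open>Evaluating the integral, the equation reads \<open>v x = (\<Sum>j. a\<^sub>j * w (x / f\<^sub>j))\<close> with
  \<open>a\<^sub>j = \<nu>\<^sub>d(\<Delta>\<^sub>j) u(f\<^sub>j) / \<bar>f\<^sub>j\<bar>\<close>. Substituting \<open>x = f\<^sub>1 y\<close> turns it into the fixed point
  equation \<open>w = g - K w\<close>, where \<open>K\<close> is a combination of the dilations \<open>w \<mapsto> w ((f\<^sub>1 / f\<^sub>j) * _)\<close>,
  \<open>j \<ge> 2\<close>. A dilation by \<open>r\<close> scales the norm of \<open>L\<^sup>2(\<bar>x\<bar>\<^sup>c dx)\<close> by \<open>\<bar>r\<bar> powr (-(1+c)/2)\<close>,
  so the hypothesis says exactly that \<open>K\<close> is a contraction; the unique solution is the Neumann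
  series \<open>\<Sum>k. (-K)\<^sup>k g\<close>. Instead of working in the Banach space \<open>L\<^sup>2\<close>, the series is summed
  pointwise, dominated by the majorants \<open>\<bar>K\<bar>\<^sup>k \<bar>g\<bar>\<close>: if \<open>\<bar>K\<bar>\<close> has norm at most \<open>q < 1\<close>, then by
  Cauchy-Schwarz \<open>(\<Sum>k. \<bar>K\<bar>\<^sup>k \<bar>g\<bar>)\<^sup>2 \<le> (\<Sum>k. (\<bar>K\<bar>\<^sup>k \<bar>g\<bar>)\<^sup>2 / q\<^sup>k) / (1 - q)\<close>, and the right-hand
  side has integral at most \<open>\<parallel>g\<parallel>\<^sup>2 / (1 - q)\<close>.\<close>

section \<open>The weighted space\<close>

lemma sets_weighted_measure [simp, measurable_cong]: "sets (weighted_measure c) = sets borel"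
  by (simp add: weighted_measure_def)

lemma space_weighted_measure [simp]: "space (weighted_measure c) = UNIV"
  by (simp add: weighted_measure_def)

lemma nn_integral_weighted_measure:
  assumes [measurable]: "f \<in> borel_measurable borel"
  shows "integral\<^sup>N (weighted_measure c) f = (\<integral>\<^sup>+x. ennreal (\<bar>x\<bar> powr c) * f x \<partial>lborel)"
  unfolding weighted_measure_def by (subst nn_integral_density) auto

lemma AE_weighted_measure_iff: "(AE x in weighted_measure c. P x) \<longleftrightarrow> (AE x in lborel. P x)"
proof -
  have "(AE x in weighted_measure c. P x) \<longleftrightarrow> (AE x in lborel. 0 < ennreal (\<bar>x\<bar> powr c) \<longrightarrow> P x)"
    unfolding weighted_measure_def by (subst AE_density) auto
  also have "\<dots> \<longleftrightarrow> (AE x in lborel. P x)"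
  proof
    assume "AE x in lborel. 0 < ennreal (\<bar>x\<bar> powr c) \<longrightarrow> P x"
    with AE_lborel_singleton[of "0::real"] show "AE x in lborel. P x"
      by eventually_elim simp
  qed auto
  finally show ?thesis .
qed

lemma AE_lborel_scale:
  fixes s :: real
  assumes "AE y in lborel. P y" and "s \<noteq> 0"
  shows "AE x in lborel. P (s * x)"
proof -
  have "AE y in density (distr lborel borel ((*) s)) (\<lambda>_. ennreal \<bar>s\<bar>). P y"
    using assms by (subst (asm) lborel_distr_mult'[OF assms(2)])
  then have "AE y in distr lborel borel ((*) s). P y"
    using assms(2) by (subst (asm) AE_density) auto
  then show ?thesis by (rule AE_distrD[rotated]) simp
qed

lemma AE_lborel_scale_iff:
  fixes s :: real
  assumes "s \<noteq> 0"
  shows "(AE x in lborel. P (s * x)) \<longleftrightarrow> (AE x in lborel. P x)"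
proof
  assume "AE x in lborel. P (s * x)"
  from AE_lborel_scale[OF this, of "1 / s"] assms show "AE x in lborel. P x" by simp
qed (use AE_lborel_scale assms in auto)

definition sq_integral :: "real \<Rightarrow> (real \<Rightarrow> real) \<Rightarrow> ennreal" where
  "sq_integral c h = (\<integral>\<^sup>+x. ennreal ((h x)\<^sup>2) \<partial>weighted_measure c)"

lemma sq_integral_abs [simp]: "sq_integral c (\<lambda>x. \<bar>h x\<bar>) = sq_integral c h"
  by (simp add: sq_integral_def)

lemma sq_integral_eq_0_iff:
  assumes [measurable]: "h \<in> borel_measurable borel"
  shows "sq_integral c h = 0 \<longleftrightarrow> (AE x in lborel. h x = 0)"
  unfolding sq_integral_def by (subst nn_integral_0_iff_AE) (auto simp: AE_weighted_measure_iff)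

lemma L2w_iff_sq_integral: "L2w c w \<longleftrightarrow> w \<in> borel_measurable borel \<and> sq_integral c w < \<infinity>"
  unfolding L2w_def sq_integral_def by (auto simp: integrable_iff_bounded)

lemma sq_integral_dilation:
  assumes [measurable]: "h \<in> borel_measurable borel" and r: "r \<noteq> 0"
  shows "sq_integral c (\<lambda>x. h (r * x)) = ennreal (\<bar>r\<bar> powr -(1+c)) * sq_integral c h"
proof -
  let ?L = "sq_integral c (\<lambda>x. h (r * x))"
  have "sq_integral c h = (\<integral>\<^sup>+x. ennreal (\<bar>x\<bar> powr c) * ennreal ((h x)\<^sup>2) \<partial>lborel)"
    unfolding sq_integral_def by (rule nn_integral_weighted_measure) measurable
  also have "\<dots> = ennreal \<bar>r\<bar> * (\<integral>\<^sup>+x. ennreal (\<bar>0 + r*x\<bar> powr c) * ennreal ((h (0 + r*x))\<^sup>2) \<partial>lborel)"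
    by (rule nn_integral_real_affine) (use r in auto)
  also have "\<dots> = ennreal \<bar>r\<bar> * (\<integral>\<^sup>+x. ennreal (\<bar>r\<bar> powr c) * (ennreal (\<bar>x\<bar> powr c) * ennreal ((h (r*x))\<^sup>2)) \<partial>lborel)"
    by (simp add: abs_mult powr_mult ennreal_mult mult.assoc)
  also have "\<dots> = ennreal \<bar>r\<bar> * (ennreal (\<bar>r\<bar> powr c) * ?L)"
    unfolding sq_integral_def by (subst nn_integral_cmult) (auto simp: nn_integral_weighted_measure)
  also have "\<dots> = ennreal (\<bar>r\<bar> powr (1+c)) * ?L"
    using r by (simp add: powr_add ennreal_mult mult.assoc)
  finally have "ennreal (\<bar>r\<bar> powr -(1+c)) * sq_integral c h
      = ennreal (\<bar>r\<bar> powr -(1+c) * \<bar>r\<bar> powr (1+c)) * ?L"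
    by (simp add: ennreal_mult mult.assoc)
  also have "\<bar>r\<bar> powr -(1+c) * \<bar>r\<bar> powr (1+c) = 1"
    using r by (simp add: powr_add[symmetric])
  finally show ?thesis by simp
qed

lemma L2w_scaled_dilation:
  assumes "L2w c v" and "r \<noteq> 0"
  shows "L2w c (\<lambda>y. k * v (r * y))"
proof -
  have [measurable]: "v \<in> borel_measurable borel" and "sq_integral c v < \<infinity>"
    using assms(1) by (auto simp: L2w_iff_sq_integral)
  have "sq_integral c (\<lambda>y. k * v (r * y)) = ennreal (k\<^sup>2) * sq_integral c (\<lambda>y. v (r * y))"
    unfolding sq_integral_def
    by (subst nn_integral_cmult[symmetric]) (auto simp: power_mult_distrib ennreal_mult)
  also have "\<dots> < \<infinity>"
    using \<open>sq_integral c v < \<infinity>\<close> assms(2) by (simp add: sq_integral_dilation ennreal_mult_less_top)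
  finally show ?thesis by (simp add: L2w_iff_sq_integral)
qed

lemma L2w_diff:
  assumes "L2w c w" and "L2w c w'"
  shows "L2w c (\<lambda>x. w x - w' x)"
proof -
  have [measurable]: "w \<in> borel_measurable borel" "w' \<in> borel_measurable borel"
    and fin: "sq_integral c w < \<infinity>" "sq_integral c w' < \<infinity>"
    using assms by (auto simp: L2w_iff_sq_integral)
  have "sq_integral c (\<lambda>x. w x - w' x)
      \<le> (\<integral>\<^sup>+x. 2 * ennreal ((w x)\<^sup>2) + 2 * ennreal ((w' x)\<^sup>2) \<partial>weighted_measure c)"
    unfolding sq_integral_def
  proof (rule nn_integral_mono)
    fix x
    have "(w x - w' x)\<^sup>2 \<le> 2 * (w x)\<^sup>2 + 2 * (w' x)\<^sup>2"
      using zero_le_power2[of "w x + w' x"] by (simp add: power2_eq_square algebra_simps)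
    then have "ennreal ((w x - w' x)\<^sup>2) \<le> ennreal (2 * (w x)\<^sup>2 + 2 * (w' x)\<^sup>2)"
      by (rule ennreal_leI)
    then show "ennreal ((w x - w' x)\<^sup>2) \<le> 2 * ennreal ((w x)\<^sup>2) + 2 * ennreal ((w' x)\<^sup>2)"
      by (simp add: ennreal_plus ennreal_mult)
  qed
  also have "\<dots> = 2 * sq_integral c w + 2 * sq_integral c w'"
    unfolding sq_integral_def by (subst nn_integral_add) (auto simp: nn_integral_cmult)
  also have "\<dots> < \<infinity>"
    using fin by (simp add: ennreal_mult_less_top)
  finally show ?thesis by (simp add: L2w_iff_sq_integral)
qed

lemma ennreal_eq_0_if_le_mult:
  fixes x :: ennreal
  assumes "x < \<infinity>" and "x \<le> ennreal t * x" and "0 \<le> t" and "t < 1"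
  shows "x = 0"
proof -
  obtain X where X: "X \<ge> 0" "x = ennreal X"
    using assms(1) less_top_ennreal by auto
  then have "X \<le> t * X"
    using assms(2,3) by (simp add: ennreal_mult'[symmetric])
  then have "(1 - t) * X \<le> 0"
    by (simp add: algebra_simps)
  then have "X = 0"
    using X(1) assms(4) by (simp add: mult_le_0_iff)
  with X show ?thesis by simp
qed

lemma square_sum_le_weighted:
  fixes x t :: "'a \<Rightarrow> real"
  assumes "\<And>i. i \<in> I \<Longrightarrow> t i \<ge> 0" and "\<And>i. i \<in> I \<Longrightarrow> t i = 0 \<Longrightarrow> x i = 0"
  shows "(\<Sum>i\<in>I. x i)\<^sup>2 \<le> (\<Sum>i\<in>I. t i) * (\<Sum>i\<in>I. (x i)\<^sup>2 / t i)"
proof -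
  have "(\<Sum>i\<in>I. x i) = (\<Sum>i\<in>I. sqrt (t i) * (x i / sqrt (t i)))"
    by (rule sum.cong) (use assms in auto)
  moreover have "(\<Sum>i\<in>I. t i) = (\<Sum>i\<in>I. (sqrt (t i))\<^sup>2)"
    by (rule sum.cong) (use assms in auto)
  moreover have "(\<Sum>i\<in>I. (x i)\<^sup>2 / t i) = (\<Sum>i\<in>I. (x i / sqrt (t i))\<^sup>2)"
    by (rule sum.cong) (use assms in \<open>auto simp: power_divide\<close>)
  ultimately show ?thesis using Cauchy_Schwarz_ineq_sum by metis
qed

lemma square_suminf_le_weighted_geometric:
  fixes p :: "nat \<Rightarrow> real"
  assumes q: "0 < q" "q < 1" and p_nonneg: "\<And>k. p k \<ge> 0"
    and summable: "summable (\<lambda>k. (p k)\<^sup>2 / q ^ k)"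
  shows "summable p" and "(\<Sum>k. p k)\<^sup>2 \<le> (\<Sum>k. (p k)\<^sup>2 / q ^ k) / (1 - q)"
proof -
  define e where "e = (\<Sum>k. (p k)\<^sup>2 / q ^ k)"
  have e_nonneg: "e \<ge> 0"
    unfolding e_def using summable q by (intro suminf_nonneg) auto
  have geometric: "(\<Sum>k<M. q ^ k) \<le> 1 / (1 - q)" for M
    using sum_le_suminf[OF summable_geometric, of q "{..<M}"] suminf_geometric[of q] q by auto
  have "(\<Sum>k<M. p k)\<^sup>2 \<le> e / (1 - q)" for M
  proof -
    have "(\<Sum>k<M. p k)\<^sup>2 \<le> (\<Sum>k<M. q ^ k) * (\<Sum>k<M. (p k)\<^sup>2 / q ^ k)"
      by (rule square_sum_le_weighted) (use q in auto)
    also have "\<dots> \<le> (1 / (1 - q)) * e"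
      unfolding e_def using summable q geometric
      by (intro mult_mono sum_le_suminf sum_nonneg) auto
    finally show ?thesis by simp
  qed
  then have bound: "(\<Sum>k<M. p k) \<le> sqrt (e / (1 - q))" for M
    by (simp add: real_le_rsqrt)
  show s: "summable p"
    by (rule summableI_nonneg_bounded[OF p_nonneg bound])
  have "(\<Sum>k. p k)\<^sup>2 \<le> (sqrt (e / (1 - q)))\<^sup>2"
    using suminf_le_const[OF s bound] suminf_nonneg[OF s p_nonneg] by (intro power_mono) auto
  then show "(\<Sum>k. p k)\<^sup>2 \<le> e / (1 - q)"
    using e_nonneg q by simp
qed

section \<open>A contracting combination of dilations\<close>

locale contracting_dilations =
  fixes c q :: real and I :: "nat set" and b r :: "nat \<Rightarrow> real"
  assumes finite_I: "finite I"
    and r_nonzero: "\<And>j. j \<in> I \<Longrightarrow> r j \<noteq> 0"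
    and contraction: "(\<Sum>j\<in>I. \<bar>b j\<bar> * \<bar>r j\<bar> powr (-(1+c)/2)) \<le> q"
    and q_pos: "0 < q" and q_less_1: "q < 1"
begin

definition dil :: "(real \<Rightarrow> real) \<Rightarrow> real \<Rightarrow> real" where
  "dil h y = (\<Sum>j\<in>I. b j * h (r j * y))"

definition dil_abs :: "(real \<Rightarrow> real) \<Rightarrow> real \<Rightarrow> real" where
  "dil_abs h y = (\<Sum>j\<in>I. \<bar>b j\<bar> * h (r j * y))"

definition weight :: "nat \<Rightarrow> real" where
  "weight j = \<bar>b j\<bar> * \<bar>r j\<bar> powr (-(1+c)/2)"

lemma dil_measurable [measurable]:
  assumes [measurable]: "h \<in> borel_measurable borel"
  shows "dil h \<in> borel_measurable borel"
  unfolding dil_def[abs_def] by measurable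

lemma dil_abs_measurable [measurable]:
  assumes [measurable]: "h \<in> borel_measurable borel"
  shows "dil_abs h \<in> borel_measurable borel"
  unfolding dil_abs_def[abs_def] by measurable

lemma dil_abs_nonneg: "(\<And>y. h y \<ge> 0) \<Longrightarrow> dil_abs h y \<ge> 0"
  unfolding dil_abs_def by (intro sum_nonneg) auto

lemma dil_diff: "dil (\<lambda>y. f y - g y) y = dil f y - dil g y"
  by (simp add: dil_def algebra_simps sum_subtractf)

lemma abs_dil_le: "\<bar>dil h y\<bar> \<le> dil_abs (\<lambda>y. \<bar>h y\<bar>) y"
  unfolding dil_def dil_abs_def by (rule order.trans[OF sum_abs]) (simp add: abs_mult)

lemma weight_nonneg: "weight j \<ge> 0"
  by (simp add: weight_def)

lemma weight_eq_0_imp: "j \<in> I \<Longrightarrow> weight j = 0 \<Longrightarrow> b j = 0"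
  using r_nonzero by (simp add: weight_def)

lemma weight_dilation_factor: "j \<in> I \<Longrightarrow> (b j)\<^sup>2 / weight j * \<bar>r j\<bar> powr -(1+c) = weight j"
proof -
  assume j: "j \<in> I"
  have "(\<bar>r j\<bar> powr (-(1+c)/2))\<^sup>2 = \<bar>r j\<bar> powr -(1+c)"
    by (simp add: power2_eq_square powr_add[symmetric])
  then have "(b j)\<^sup>2 * \<bar>r j\<bar> powr -(1+c) = (weight j)\<^sup>2"
    by (simp add: weight_def power_mult_distrib)
  then show ?thesis
    using weight_eq_0_imp[OF j] by (cases "weight j = 0") (simp_all add: power2_eq_square)
qed

lemma square_dil_abs_le: "(dil_abs h y)\<^sup>2 \<le> q * (\<Sum>j\<in>I. (\<bar>b j\<bar> * h (r j * y))\<^sup>2 / weight j)"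
proof -
  have "(dil_abs h y)\<^sup>2 \<le> (\<Sum>j\<in>I. weight j) * (\<Sum>j\<in>I. (\<bar>b j\<bar> * h (r j * y))\<^sup>2 / weight j)"
    unfolding dil_abs_def by (rule square_sum_le_weighted) (auto simp: weight_nonneg weight_eq_0_imp)
  also have "\<dots> \<le> q * (\<Sum>j\<in>I. (\<bar>b j\<bar> * h (r j * y))\<^sup>2 / weight j)"
    using contraction by (intro mult_right_mono sum_nonneg) (auto simp: weight_def weight_nonneg)
  finally show ?thesis .
qed

lemma sq_integral_dil_abs_le:
  assumes [measurable]: "h \<in> borel_measurable borel"
  shows "sq_integral c (dil_abs h) \<le> ennreal (q\<^sup>2) * sq_integral c h"
proof -
  define F where "F j y = (\<bar>b j\<bar> * h (r j * y))\<^sup>2 / weight j" for j y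
  have F_nonneg: "F j y \<ge> 0" for j y
    by (simp add: F_def weight_nonneg)
  have integral_F: "(\<integral>\<^sup>+y. ennreal (F j y) \<partial>weighted_measure c) = ennreal (weight j) * sq_integral c h"
    if j: "j \<in> I" for j
  proof -
    have "(\<integral>\<^sup>+y. ennreal (F j y) \<partial>weighted_measure c)
        = ennreal ((b j)\<^sup>2 / weight j) * sq_integral c (\<lambda>y. h (r j * y))"
      unfolding sq_integral_def F_def
      by (subst nn_integral_cmult[symmetric])
         (auto simp: power_mult_distrib weight_nonneg ennreal_mult[symmetric] intro!: nn_integral_cong)
    also have "\<dots> = ennreal ((b j)\<^sup>2 / weight j * \<bar>r j\<bar> powr -(1+c)) * sq_integral c h"
      using r_nonzero[OF j] by (subst ennreal_mult) (auto simp: sq_integral_dilation weight_nonneg mult.assoc)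
    finally show ?thesis
      using weight_dilation_factor[OF j] by simp
  qed
  have "sq_integral c (dil_abs h) \<le> (\<integral>\<^sup>+y. ennreal q * (\<Sum>j\<in>I. ennreal (F j y)) \<partial>weighted_measure c)"
    unfolding sq_integral_def
  proof (rule nn_integral_mono)
    fix y
    have "ennreal ((dil_abs h y)\<^sup>2) \<le> ennreal (q * (\<Sum>j\<in>I. F j y))"
      unfolding F_def by (rule ennreal_leI square_dil_abs_le)+
    then show "ennreal ((dil_abs h y)\<^sup>2) \<le> ennreal q * (\<Sum>j\<in>I. ennreal (F j y))"
      using q_pos F_nonneg by (simp add: ennreal_mult')
  qed
  also have "\<dots> = ennreal q * (\<Sum>j\<in>I. ennreal (weight j) * sq_integral c h)"
    unfolding F_def by (subst nn_integral_cmult) (auto simp: nn_integral_sum integral_F[unfolded F_def])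
  also have "\<dots> = ennreal q * (ennreal (sum weight I) * sq_integral c h)"
    by (simp add: weight_nonneg sum_distrib_right[symmetric])
  also have "\<dots> \<le> ennreal q * (ennreal q * sq_integral c h)"
    using contraction by (intro mult_left_mono mult_right_mono ennreal_leI) (auto simp: weight_def)
  also have "\<dots> = ennreal (q\<^sup>2) * sq_integral c h"
    using q_pos by (simp add: ennreal_mult power2_eq_square mult.assoc)
  finally show ?thesis .
qed

lemma eq_neg_dil_imp_zero:
  assumes [measurable]: "h \<in> borel_measurable borel" and fin: "sq_integral c h < \<infinity>"
    and eq: "AE y in lborel. h y = - dil h y"
  shows "AE y in lborel. h y = 0"
proof -
  have "sq_integral c h \<le> sq_integral c (dil_abs (\<lambda>y. \<bar>h y\<bar>))"
    unfolding sq_integral_def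
  proof (rule nn_integral_mono_AE)
    show "AE y in weighted_measure c. ennreal ((h y)\<^sup>2) \<le> ennreal ((dil_abs (\<lambda>y. \<bar>h y\<bar>) y)\<^sup>2)"
      unfolding AE_weighted_measure_iff using eq
    proof eventually_elim
      case (elim y)
      then have "\<bar>h y\<bar> \<le> dil_abs (\<lambda>y. \<bar>h y\<bar>) y"
        using abs_dil_le[of h y] by simp
      then show ?case
        by (intro ennreal_leI) (metis abs_ge_zero power_mono power2_abs)
    qed
  qed
  also have "\<dots> \<le> ennreal (q\<^sup>2) * sq_integral c h"
    using sq_integral_dil_abs_le[of "\<lambda>y. \<bar>h y\<bar>"] by simp
  finally have le: "sq_integral c h \<le> ennreal (q\<^sup>2) * sq_integral c h" .
  have "sq_integral c h = 0"
    using q_pos q_less_1 by (intro ennreal_eq_0_if_le_mult[OF fin le]) (auto simp: power_less_one_iff)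
  then show ?thesis
    by (simp add: sq_integral_eq_0_iff)
qed

definition majorant :: "(real \<Rightarrow> real) \<Rightarrow> nat \<Rightarrow> real \<Rightarrow> real" where
  "majorant g k = (dil_abs ^^ k) (\<lambda>y. \<bar>g y\<bar>)"

definition neumann_term :: "(real \<Rightarrow> real) \<Rightarrow> nat \<Rightarrow> real \<Rightarrow> real" where
  "neumann_term g k = ((\<lambda>h y. - dil h y) ^^ k) g"

definition neumann_sum :: "(real \<Rightarrow> real) \<Rightarrow> real \<Rightarrow> real" where
  "neumann_sum g y = (\<Sum>k. neumann_term g k y)"

lemma majorant_0 [simp]: "majorant g 0 = (\<lambda>y. \<bar>g y\<bar>)"
  by (simp add: majorant_def)

lemma majorant_Suc: "majorant g (Suc k) = dil_abs (majorant g k)"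
  by (simp add: majorant_def)

lemma neumann_term_0 [simp]: "neumann_term g 0 = g"
  by (simp add: neumann_term_def)

lemma neumann_term_Suc: "neumann_term g (Suc k) = (\<lambda>y. - dil (neumann_term g k) y)"
  by (simp add: neumann_term_def)

lemma majorant_nonneg: "majorant g k y \<ge> 0"
  by (induction k arbitrary: y) (simp_all add: majorant_Suc dil_abs_nonneg)

lemma abs_neumann_term_le: "\<bar>neumann_term g k y\<bar> \<le> majorant g k y"
proof (induction k arbitrary: y)
  case (Suc k)
  have "\<bar>neumann_term g (Suc k) y\<bar> \<le> dil_abs (\<lambda>y. \<bar>neumann_term g k y\<bar>) y"
    using abs_dil_le by (simp add: neumann_term_Suc)
  also have "\<dots> \<le> majorant g (Suc k) y"
    unfolding majorant_Suc dil_abs_def by (intro sum_mono mult_left_mono Suc.IH) auto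
  finally show ?case .
qed simp

lemma majorant_measurable [measurable]:
  assumes [measurable]: "g \<in> borel_measurable borel"
  shows "majorant g k \<in> borel_measurable borel"
  by (induction k) (simp_all add: majorant_Suc)

lemma neumann_term_measurable [measurable]:
  assumes [measurable]: "g \<in> borel_measurable borel"
  shows "neumann_term g k \<in> borel_measurable borel"
proof (induction k)
  case (Suc k)
  then show ?case unfolding neumann_term_Suc by measurable
qed simp

lemma neumann_sum_measurable [measurable]:
  assumes [measurable]: "g \<in> borel_measurable borel"
  shows "neumann_sum g \<in> borel_measurable borel"
  unfolding neumann_sum_def[abs_def] by measurable

lemma sq_integral_majorant:
  assumes [measurable]: "g \<in> borel_measurable borel"
  shows "sq_integral c (majorant g k) \<le> ennreal (q ^ (2*k)) * sq_integral c g"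
proof (induction k)
  case (Suc k)
  have "sq_integral c (majorant g (Suc k)) \<le> ennreal (q\<^sup>2) * sq_integral c (majorant g k)"
    unfolding majorant_Suc by (rule sq_integral_dil_abs_le) measurable
  also have "\<dots> \<le> ennreal (q\<^sup>2) * (ennreal (q ^ (2*k)) * sq_integral c g)"
    by (intro mult_left_mono Suc.IH) auto
  also have "\<dots> = ennreal (q ^ (2 * Suc k)) * sq_integral c g"
    using q_pos by (simp add: ennreal_mult power2_eq_square mult.assoc)
  finally show ?case .
qed simp

lemma summable_neumann_term:
  "summable (\<lambda>k. majorant g k y) \<Longrightarrow> summable (\<lambda>k. neumann_term g k y)"
  by (rule summable_comparison_test'[where N=0]) (auto intro: abs_neumann_term_le)

lemma summable_majorant_dilation:
  assumes summable: "summable (\<lambda>k. majorant g k y)" and "j \<in> I" and "b j \<noteq> 0"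
  shows "summable (\<lambda>k. majorant g k (r j * y))"
proof (rule summable_comparison_test'[where N=0])
  show "summable (\<lambda>k. majorant g (Suc k) y / \<bar>b j\<bar>)"
    using summable summable_Suc_iff[of "\<lambda>k. majorant g k y"] by (intro summable_divide) simp
  fix k
  have "\<bar>b j\<bar> * majorant g k (r j * y) \<le> majorant g (Suc k) y"
    unfolding majorant_Suc dil_abs_def using assms finite_I majorant_nonneg
    by (intro member_le_sum[where f = "\<lambda>i. \<bar>b i\<bar> * majorant g k (r i * y)"]) auto
  then show "norm (majorant g k (r j * y)) \<le> majorant g (Suc k) y / \<bar>b j\<bar>"
    using \<open>b j \<noteq> 0\<close> majorant_nonneg by (simp add: field_simps)
qed

lemma neumann_sum_fixed_point:
  assumes summable: "summable (\<lambda>k. majorant g k y)"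
  shows "neumann_sum g y = g y - dil (neumann_sum g) y"
proof -
  have dilated: "summable (\<lambda>k. b j * neumann_term g k (r j * y))
      \<and> (\<Sum>k. b j * neumann_term g k (r j * y)) = b j * neumann_sum g (r j * y)"
    if "j \<in> I" for j
  proof (cases "b j = 0")
    case False
    then have "summable (\<lambda>k. neumann_term g k (r j * y))"
      using summable_neumann_term summable_majorant_dilation summable that by blast
    then show ?thesis
      by (simp add: neumann_sum_def suminf_mult summable_mult)
  qed simp
  have "neumann_sum g y = g y + (\<Sum>k. neumann_term g (Suc k) y)"
    using suminf_split_head[OF summable_neumann_term[OF summable]] by (simp add: neumann_sum_def)
  also have "(\<Sum>k. neumann_term g (Suc k) y) = - (\<Sum>k. \<Sum>j\<in>I. b j * neumann_term g k (r j * y))"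
    unfolding neumann_term_Suc dil_def
    using dilated by (intro suminf_minus summable_sum) auto
  also have "(\<Sum>k. \<Sum>j\<in>I. b j * neumann_term g k (r j * y)) = dil (neumann_sum g) y"
    unfolding dil_def using dilated by (subst suminf_sum) auto
  finally show ?thesis by simp
qed

lemma nn_integral_weighted_majorant:
  assumes [measurable]: "g \<in> borel_measurable borel"
  shows "(\<integral>\<^sup>+y. (\<Sum>k. ennreal ((majorant g k y)\<^sup>2 / q ^ k)) \<partial>weighted_measure c)
           \<le> sq_integral c g * ennreal (1 / (1 - q))"
proof -
  have term_bound: "(\<integral>\<^sup>+y. ennreal ((majorant g k y)\<^sup>2 / q ^ k) \<partial>weighted_measure c)
                \<le> sq_integral c g * ennreal (q ^ k)" for k
  proof -
    have "(\<integral>\<^sup>+y. ennreal ((majorant g k y)\<^sup>2 / q ^ k) \<partial>weighted_measure c)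
        = ennreal (1 / q ^ k) * sq_integral c (majorant g k)"
      unfolding sq_integral_def using q_pos
      by (subst nn_integral_cmult[symmetric]) (auto simp: ennreal_mult[symmetric] intro!: nn_integral_cong)
    also have "\<dots> \<le> ennreal (1 / q ^ k) * (ennreal (q ^ (2*k)) * sq_integral c g)"
      by (intro mult_left_mono sq_integral_majorant) auto
    also have "\<dots> = sq_integral c g * ennreal (q ^ k)"
    proof -
      have "ennreal (1 / q ^ k) * ennreal (q ^ (2*k)) = ennreal (q ^ k)"
        using q_pos by (simp add: ennreal_mult'[symmetric] mult_2 power_add)
      then show ?thesis by (simp add: ac_simps)
    qed
    finally show ?thesis .
  qed
  have "(\<integral>\<^sup>+y. (\<Sum>k. ennreal ((majorant g k y)\<^sup>2 / q ^ k)) \<partial>weighted_measure c)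
      = (\<Sum>k. \<integral>\<^sup>+y. ennreal ((majorant g k y)\<^sup>2 / q ^ k) \<partial>weighted_measure c)"
    by (rule nn_integral_suminf) measurable
  also have "\<dots> \<le> (\<Sum>k. sq_integral c g * ennreal (q ^ k))"
    by (rule suminf_le[OF term_bound summableI summableI])
  also have "\<dots> = sq_integral c g * (\<Sum>k. ennreal (q ^ k))"
    by (rule ennreal_suminf_cmult)
  also have "(\<Sum>k. ennreal (q ^ k)) = ennreal (1 / (1 - q))"
    using q_pos q_less_1 by (simp add: suminf_ennreal2 summable_geometric suminf_geometric)
  finally show ?thesis .
qed

lemma neumann_sum_solves:
  assumes [measurable]: "g \<in> borel_measurable borel" and fin: "sq_integral c g < \<infinity>"
  shows "sq_integral c (neumann_sum g) < \<infinity>"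
    and "AE y in lborel. neumann_sum g y = g y - dil (neumann_sum g) y"
proof -
  define E where "E y = (\<Sum>k. ennreal ((majorant g k y)\<^sup>2 / q ^ k))" for y
  have [measurable]: "E \<in> borel_measurable borel"
    unfolding E_def by measurable
  have "integral\<^sup>N (weighted_measure c) E \<le> sq_integral c g * ennreal (1 / (1 - q))"
    unfolding E_def by (rule nn_integral_weighted_majorant) measurable
  also have "\<dots> < \<infinity>"
    using fin by (simp add: ennreal_mult_less_top)
  finally have E_fin: "integral\<^sup>N (weighted_measure c) E < \<infinity>" .
  then have E_AE: "AE y in lborel. E y \<noteq> \<infinity>"
    using nn_integral_PInf_AE[of E "weighted_measure c"] by (auto simp: AE_weighted_measure_iff)
  have pointwise: "summable (\<lambda>k. majorant g k y)
      \<and> ennreal ((neumann_sum g y)\<^sup>2) \<le> ennreal (1 / (1 - q)) * E y" if "E y \<noteq> \<infinity>" for y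
  proof -
    define a where "a k = (majorant g k y)\<^sup>2 / q ^ k" for k
    have a_nonneg: "a k \<ge> 0" for k
      using q_pos by (simp add: a_def)
    have "summable a"
      using that a_nonneg by (intro summable_suminf_not_top) (auto simp: E_def a_def)
    have E_eq: "E y = ennreal (\<Sum>k. a k)"
      unfolding E_def a_def[symmetric] by (rule suminf_ennreal2[OF a_nonneg \<open>summable a\<close>])
    have s: "summable (\<lambda>k. majorant g k y)"
      and bound: "(\<Sum>k. majorant g k y)\<^sup>2 \<le> (\<Sum>k. a k) / (1 - q)"
      using square_suminf_le_weighted_geometric[OF q_pos q_less_1 majorant_nonneg]
        \<open>summable a\<close> unfolding a_def by auto
    have "\<bar>neumann_sum g y\<bar> \<le> (\<Sum>k. majorant g k y)"
      using norm_suminf_le[of "\<lambda>k. neumann_term g k y" "\<lambda>k. majorant g k y"] s abs_neumann_term_le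
      by (simp add: neumann_sum_def)
    then have "(neumann_sum g y)\<^sup>2 \<le> (\<Sum>k. majorant g k y)\<^sup>2"
      by (metis abs_ge_zero power2_abs power_mono)
    with bound have "ennreal ((neumann_sum g y)\<^sup>2) \<le> ennreal (1 / (1 - q) * (\<Sum>k. a k))"
      by (intro ennreal_leI) simp
    then show ?thesis
      using s E_eq q_less_1 by (simp add: ennreal_mult'[symmetric])
  qed
  show "AE y in lborel. neumann_sum g y = g y - dil (neumann_sum g) y"
    using E_AE by eventually_elim (simp add: pointwise neumann_sum_fixed_point)
  have "sq_integral c (neumann_sum g) \<le> (\<integral>\<^sup>+y. ennreal (1 / (1 - q)) * E y \<partial>weighted_measure c)"
    unfolding sq_integral_def
  proof (rule nn_integral_mono_AE)
    show "AE y in weighted_measure c. ennreal ((neumann_sum g y)\<^sup>2) \<le> ennreal (1 / (1 - q)) * E y"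
      unfolding AE_weighted_measure_iff using E_AE by eventually_elim (simp add: pointwise)
  qed
  also have "\<dots> = ennreal (1 / (1 - q)) * integral\<^sup>N (weighted_measure c) E"
    by (rule nn_integral_cmult) measurable
  also have "\<dots> < \<infinity>"
    using E_fin by (simp add: ennreal_mult_less_top)
  finally show "sq_integral c (neumann_sum g) < \<infinity>" .
qed

lemma fixed_point_equation_unique_solution:
  assumes "L2w c g"
  shows "\<exists>w. L2w c w \<and> (AE y in lborel. w y = g y - dil w y)
           \<and> (\<forall>w'. L2w c w' \<and> (AE y in lborel. w' y = g y - dil w' y) \<longrightarrow> (AE y in lborel. w' y = w y))"
proof -
  have [measurable]: "g \<in> borel_measurable borel" and "sq_integral c g < \<infinity>"
    using assms by (auto simp: L2w_iff_sq_integral)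
  define w where "w = neumann_sum g"
  have "L2w c w"
    using neumann_sum_solves(1) \<open>sq_integral c g < \<infinity>\<close> by (simp add: w_def L2w_iff_sq_integral)
  moreover have eq: "AE y in lborel. w y = g y - dil w y"
    using neumann_sum_solves(2) \<open>sq_integral c g < \<infinity>\<close> by (simp add: w_def)
  moreover have "AE y in lborel. w' y = w y"
    if "L2w c w'" and eq': "AE y in lborel. w' y = g y - dil w' y" for w'
  proof -
    have "L2w c (\<lambda>y. w' y - w y)"
      using L2w_diff \<open>L2w c w\<close> that(1) by blast
    moreover have "AE y in lborel. w' y - w y = - dil (\<lambda>y. w' y - w y) y"
      using eq eq' by eventually_elim (simp add: dil_diff)
    ultimately have "AE y in lborel. w' y - w y = 0"
      by (intro eq_neg_dil_imp_zero) (auto simp: L2w_iff_sq_integral)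
    then show ?thesis by eventually_elim simp
  qed
  ultimately show ?thesis by blast
qed

end

section \<open>Reduction of the integral equation\<close>

lemma dilation_equation_rescale:
  fixes a s :: "nat \<Rightarrow> real"
  assumes "finite I" and "i \<in> I" and "a i \<noteq> 0" and "s i \<noteq> 0"
  shows "(AE x in lborel. v x = (\<Sum>j\<in>I. a j * w (x / s j)))
     \<longleftrightarrow> (AE y in lborel. w y = v (s i * y) / a i - (\<Sum>j\<in>I - {i}. a j / a i * w (s i / s j * y)))"
proof -
  have pointwise: "v (s i * y) = (\<Sum>j\<in>I. a j * w (s i * y / s j))
      \<longleftrightarrow> w y = v (s i * y) / a i - (\<Sum>j\<in>I - {i}. a j / a i * w (s i / s j * y))" for y
  proof -
    have "(\<Sum>j\<in>I. a j * w (s i * y / s j)) = a i * w y + (\<Sum>j\<in>I - {i}. a j * w (s i / s j * y))"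
      using assms by (simp add: sum.remove)
    moreover have "(\<Sum>j\<in>I - {i}. a j / a i * w (s i / s j * y)) = (\<Sum>j\<in>I - {i}. a j * w (s i / s j * y)) / a i"
      by (simp add: sum_divide_distrib)
    ultimately show ?thesis
      using assms(3) by (auto simp: field_simps)
  qed
  have "(AE x in lborel. v x = (\<Sum>j\<in>I. a j * w (x / s j)))
      \<longleftrightarrow> (AE y in lborel. v (s i * y) = (\<Sum>j\<in>I. a j * w (s i * y / s j)))"
    using AE_lborel_scale_iff[OF assms(4), of "\<lambda>x. v x = (\<Sum>j\<in>I. a j * w (x / s j))"] by simp
  also have "\<dots> \<longleftrightarrow> (AE y in lborel. w y = v (s i * y) / a i - (\<Sum>j\<in>I - {i}. a j / a i * w (s i / s j * y)))"
    by (simp only: pointwise)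
  finally show ?thesis .
qed

lemma dilation_equation_unique_solution:
  fixes a s :: "nat \<Rightarrow> real"
  assumes "finite I" and "i \<in> I" and "a i \<noteq> 0" and s_nonzero: "\<And>j. j \<in> I \<Longrightarrow> s j \<noteq> 0"
    and small: "(\<Sum>j\<in>I - {i}. \<bar>a j / a i\<bar> * \<bar>s i / s j\<bar> powr (-(1+c)/2)) < 1"
    and "L2w c v"
  shows "\<exists>w. L2w c w \<and> (AE x in weighted_measure c. v x = (\<Sum>j\<in>I. a j * w (x / s j)))
           \<and> (\<forall>w'. L2w c w' \<and> (AE x in weighted_measure c. v x = (\<Sum>j\<in>I. a j * w' (x / s j)))
                   \<longrightarrow> (AE x in weighted_measure c. w' x = w x))"
proof -
  \<comment> \<open>\<open>q\<close> must be positive, as the Neumann series is controlled with weights \<open>q\<^sup>-\<^sup>k\<close>\<close>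
  define q where "q = max (1/2) (\<Sum>j\<in>I - {i}. \<bar>a j / a i\<bar> * \<bar>s i / s j\<bar> powr (-(1+c)/2))"
  interpret contracting_dilations c q "I - {i}" "\<lambda>j. a j / a i" "\<lambda>j. s i / s j"
    using assms by unfold_locales (auto simp: q_def)
  have L2: "L2w c (\<lambda>y. (1 / a i) * v (s i * y))"
    using L2w_scaled_dilation assms by blast
  have rescale: "(AE x in lborel. v x = (\<Sum>j\<in>I. a j * w (x / s j)))
      \<longleftrightarrow> (AE y in lborel. w y = (1 / a i) * v (s i * y) - dil w y)" for w
    unfolding dil_def using dilation_equation_rescale[of I i a s v w, OF assms(1-3) s_nonzero[OF assms(2)]] by simp
  show ?thesis
    unfolding AE_weighted_measure_iff rescale by (rule fixed_point_equation_unique_solution[OF L2])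
qed

lemma sum_indicator_disjoint:
  fixes G :: "'i \<Rightarrow> real"
  assumes "finite A" and "disjoint_family_on \<Delta> A" and "j \<in> A" and "s \<in> \<Delta> j"
  shows "(\<Sum>i\<in>A. indicator (\<Delta> i) s * G i) = G j"
proof -
  have "(\<Sum>i\<in>A. indicator (\<Delta> i) s * G i) = (\<Sum>i\<in>A. if i = j then G j else 0)"
    using assms by (intro sum.cong) (auto simp: disjoint_family_on_def indicator_def)
  then show ?thesis
    using assms by simp
qed

lemma comp_simple_fun:
  fixes F :: "real \<Rightarrow> real"
  assumes "disjoint_family_on \<Delta> {1..n}" and "F 0 = 0"
  shows "F (simple_fun n fv \<Delta> s) = (\<Sum>j=1..n. indicator (\<Delta> j) s * F (fv j))"
proof (cases "\<exists>j\<in>{1..n}. s \<in> \<Delta> j")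
  case True
  then obtain j where j: "j \<in> {1..n}" "s \<in> \<Delta> j" by blast
  have "simple_fun n fv \<Delta> s = (\<Sum>i=1..n. indicator (\<Delta> i) s * fv i)"
    by (simp add: simple_fun_def mult.commute)
  also have "\<dots> = fv j"
    by (rule sum_indicator_disjoint[OF _ assms(1) j]) simp
  moreover have "(\<Sum>i=1..n. indicator (\<Delta> i) s * F (fv i)) = F (fv j)"
    by (rule sum_indicator_disjoint[OF _ assms(1) j]) simp
  ultimately show ?thesis
    by simp
next
  case False
  then show ?thesis
    using assms(2) by (simp add: simple_fun_def indicator_def)
qed

lemma rhs_op_simple_fun:
  fixes \<Delta> :: "nat \<Rightarrow> 'd::euclidean_space set"
  assumes "\<forall>j\<in>{1..n}. \<Delta> j \<in> sets borel" and disj: "disjoint_family_on \<Delta> {1..n}"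
    and "\<forall>j\<in>{1..n}. emeasure lborel (\<Delta> j) < \<infinity>"
  shows "rhs_op u (simple_fun n fv \<Delta>) w x
       = (\<Sum>j=1..n. measure lborel (\<Delta> j) * (u (fv j) / \<bar>fv j\<bar>) * w (x / fv j))"
proof -
  \<comment> \<open>\<open>F 0 = 0\<close> as division by zero gives zero, so the restriction to \<open>supp\<close> can be dropped\<close>
  define F where "F z = u z / \<bar>z\<bar> * w (x / z)" for z
  have "rhs_op u (simple_fun n fv \<Delta>) w x = (\<integral>s. F (simple_fun n fv \<Delta> s) \<partial>lborel)"
    unfolding rhs_op_def set_lebesgue_integral_def supp_def F_def
    by (intro Bochner_Integration.integral_cong) (auto simp: indicator_def)
  also have "\<dots> = (\<integral>s. (\<Sum>j=1..n. indicator (\<Delta> j) s * F (fv j)) \<partial>lborel)"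
    using comp_simple_fun[OF disj, of F] by (simp add: F_def)
  also have "\<dots> = (\<Sum>j=1..n. measure lborel (\<Delta> j) * F (fv j))"
    using assms by (subst Bochner_Integration.integral_sum) auto
  finally show ?thesis
    by (simp add: F_def mult.assoc)
qed

lemma dilation_weight_powr:
  fixes A B :: real
  assumes "A > 0" and "B > 0"
  shows "(A powr \<beta> / A) / (B powr \<beta> / B) * (B / A) powr (-(1+c)/2) = (A / B) powr (\<beta> + (c-1)/2)"
proof -
  have "(A powr \<beta> / A) / (B powr \<beta> / B) = (A / B) powr (\<beta> - 1)"
    using assms by (simp add: powr_divide powr_diff field_simps)
  moreover have "(B / A) powr (-(1+c)/2) = (A / B) powr ((1+c)/2)"
    using assms by (simp add: powr_divide divide_simps powr_add[symmetric])
  ultimately have "(A powr \<beta> / A) / (B powr \<beta> / B) * (B / A) powr (-(1+c)/2)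
      = (A / B) powr ((\<beta> - 1) + (1+c)/2)"
    by (simp only: powr_add)
  also have "(\<beta> - 1) + (1+c)/2 = \<beta> + (c-1)/2"
    by (simp add: field_simps)
  finally show ?thesis .
qed

lemma dilation_coefficient_weight:
  fixes x y m m' :: real
  assumes abs_u: "\<And>z. z \<noteq> 0 \<Longrightarrow> \<bar>u z\<bar> = \<bar>z\<bar> powr \<beta>"
    and "x \<noteq> 0" and "y \<noteq> 0" and "0 \<le> m" and "0 \<le> m'"
  shows "\<bar>(m * (u x / \<bar>x\<bar>)) / (m' * (u y / \<bar>y\<bar>))\<bar> * \<bar>y / x\<bar> powr (-(1+c)/2)
       = (\<bar>x\<bar> / \<bar>y\<bar>) powr (\<beta> + (c - 1) / 2) * m / m'"
proof -
  let ?W = "(\<bar>x\<bar> powr \<beta> / \<bar>x\<bar>) / (\<bar>y\<bar> powr \<beta> / \<bar>y\<bar>)"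
  have "\<bar>(m * (u x / \<bar>x\<bar>)) / (m' * (u y / \<bar>y\<bar>))\<bar> = m / m' * ?W"
    using assms by (simp add: abs_mult ac_simps)
  then have "\<bar>(m * (u x / \<bar>x\<bar>)) / (m' * (u y / \<bar>y\<bar>))\<bar> * \<bar>y / x\<bar> powr (-(1+c)/2)
      = m / m' * (?W * (\<bar>y\<bar> / \<bar>x\<bar>) powr (-(1+c)/2))"
    by (simp only: abs_divide mult.assoc)
  also have "\<dots> = m / m' * (\<bar>x\<bar> / \<bar>y\<bar>) powr (\<beta> + (c - 1) / 2)"
    using assms by (subst dilation_weight_powr) auto
  finally show ?thesis
    by simp
qed

theorem mainTheorem2:
  fixes c \<beta> :: real and u :: "real \<Rightarrow> real" and n :: nat
    and fv :: "nat \<Rightarrow> real" and \<Delta> :: "nat \<Rightarrow> 'd::euclidean_space set"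
    and v :: "real \<Rightarrow> real"
  assumes c: "c \<ge> 0"
    and u: "u = (\<lambda>x. \<bar>x\<bar> powr \<beta>) \<or> u = (\<lambda>x. sgn x * \<bar>x\<bar> powr \<beta>)"
    and n: "n \<ge> 1"
    and fv_nz: "\<forall>j\<in>{1..n}. fv j \<noteq> 0"
    and fv_inj: "inj_on fv {1..n}"
    and \<Delta>_borel: "\<forall>j\<in>{1..n}. \<Delta> j \<in> sets borel"
    and \<Delta>_disj: "disjoint_family_on \<Delta> {1..n}"
    and \<Delta>_fin: "\<forall>j\<in>{1..n}. emeasure lborel (\<Delta> j) < \<infinity>"
    and \<Delta>1_pos: "measure lborel (\<Delta> 1) > 0"
    and small: "(\<Sum>j=2..n. (\<bar>fv j\<bar> / \<bar>fv 1\<bar>) powr (\<beta> + (c - 1) / 2)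
                   * measure lborel (\<Delta> j) / measure lborel (\<Delta> 1)) < 1"
    and v: "L2w c v"
  shows "\<exists>w. L2w c w
           \<and> (AE x in weighted_measure c. v x = rhs_op u (simple_fun n fv \<Delta>) w x)
           \<and> (\<forall>w'. L2w c w' \<and> (AE x in weighted_measure c. v x = rhs_op u (simple_fun n fv \<Delta>) w' x)
                   \<longrightarrow> (AE x in weighted_measure c. w' x = w x))"
proof -
  define a where "a j = measure lborel (\<Delta> j) * (u (fv j) / \<bar>fv j\<bar>)" for j
  have rhs: "rhs_op u (simple_fun n fv \<Delta>) w x = (\<Sum>j\<in>{1..n}. a j * w (x / fv j))" for w x
    using rhs_op_simple_fun[OF \<Delta>_borel \<Delta>_disj \<Delta>_fin] by (simp add: a_def)
  have fv_1: "fv 1 \<noteq> 0"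
    using fv_nz n by auto
  have abs_u: "\<bar>u z\<bar> = \<bar>z\<bar> powr \<beta>" if "z \<noteq> 0" for z
    using u that by (auto simp: abs_mult)
  have a_1: "a 1 \<noteq> 0"
    using \<Delta>1_pos fv_1 abs_u[OF fv_1] by (auto simp: a_def)
  have "(\<Sum>j\<in>{1..n} - {1}. \<bar>a j / a 1\<bar> * \<bar>fv 1 / fv j\<bar> powr (-(1+c)/2))
      = (\<Sum>j=2..n. (\<bar>fv j\<bar> / \<bar>fv 1\<bar>) powr (\<beta> + (c - 1) / 2)
                   * measure lborel (\<Delta> j) / measure lborel (\<Delta> 1))"
    unfolding a_def
  proof (rule sum.cong)
    show "{1..n} - {1} = {2..n}"
      by auto
  qed (rule dilation_coefficient_weight[OF abs_u], use fv_nz fv_1 in auto)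
  with small have "(\<Sum>j\<in>{1..n} - {1}. \<bar>a j / a 1\<bar> * \<bar>fv 1 / fv j\<bar> powr (-(1+c)/2)) < 1"
    by simp
  then show ?thesis
    unfolding rhs using n fv_nz a_1 v by (intro dilation_equation_unique_solution) auto
qed

end
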